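(* If a Banach space $X$ has a seminormalized quasisubsymmetric (Schauder) basis, then $\ell_\infty$ embeds isomorphically into $\mathcal{L}(X)$.
   Context: $\mathcal{L}(X)$ is the space of all bounded linear operators on $X$ with the operator norm. A sequence $(e_n)$ is seminormalized if $0<\inf_n\|e_n\|\le\sup_n\|e_n\|<\infty$. For basic sequences, $(x_n)$ dominates $(y_n)$ if there is $C>0$ with $\|\sum a_ny_n\|\le C\|\sum a_nx_n\|$ for all finitely supported scalar sequences $(a_n)$. A basic sequence $(e_n)$ is quasisubsymmetric if for any two increasing sequences $(k_n)$ and $(\ell_n)$ of positive integers with $k_n\le\ell_n$ for all $n$, $(e_{k_n})$ dominates $(e_{\ell_n})$. *)

theory Defs
  imports "HOL-Analysis.Analysis"
begin

definition schauder_basis :: "(nat \<Rightarrow> 'a::real_normed_vector) \<Rightarrow> bool" where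
  "schauder_basis e \<longleftrightarrow> (\<forall>x. \<exists>!a::nat \<Rightarrow> real. (\<lambda>n. a n *\<^sub>R e n) sums x)"

definition seminormalized :: "(nat \<Rightarrow> 'a::real_normed_vector) \<Rightarrow> bool" where
  "seminormalized e \<longleftrightarrow> (\<exists>c C. 0 < c \<and> (\<forall>n. c \<le> norm (e n) \<and> norm (e n) \<le> C))"

text \<open>(x n) dominates (y n): for all finitely supported scalar sequences
  (here: supported in some initial segment {..<N}) the norm inequality holds.\<close>
definition dominates :: "(nat \<Rightarrow> 'a::real_normed_vector) \<Rightarrow> (nat \<Rightarrow> 'a) \<Rightarrow> bool" where
  "dominates x y \<longleftrightarrow> (\<exists>C>0. \<forall>(a::nat \<Rightarrow> real) N.
      norm (\<Sum>n<N. a n *\<^sub>R y n) \<le> C * norm (\<Sum>n<N. a n *\<^sub>R x n))"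

definition quasisubsymmetric :: "(nat \<Rightarrow> 'a::real_normed_vector) \<Rightarrow> bool" where
  "quasisubsymmetric e \<longleftrightarrow> (\<forall>k l :: nat \<Rightarrow> nat.
      strict_mono k \<and> strict_mono l \<and> (\<forall>n. k n \<le> l n) \<longrightarrow> dominates (e \<circ> k) (e \<circ> l))"

definition isomorphic_embedding :: "('a::real_normed_vector \<Rightarrow> 'b::real_normed_vector) \<Rightarrow> bool" where
  "isomorphic_embedding T \<longleftrightarrow> bounded_linear T \<and> (\<exists>c>0. \<forall>x. c * norm x \<le> norm (T x))"

end

theory Submission
  imports Defs
begin

text \<open>
  Quasisubsymmetry makes the basis \<open>(e\<^sub>n)\<close> dominate its right shift, so the shift extends
  to a bounded operator. A limit of \<open>(e\<^sub>n)\<close> would be a fixed point of that operator, and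
  comparing coefficients forces it to be \<open>0\<close>; as the basis is seminormalized, \<open>(e\<^sub>n)\<close> is
  therefore not Cauchy, which yields interlaced indices \<open>p\<^sub>n < q\<^sub>n < p\<^sub>n\<^sub>+\<^sub>1\<close> with
  \<open>\<parallel>e(q\<^sub>n) - e(p\<^sub>n)\<parallel> \<ge> \<delta>\<close>. For \<open>A \<subseteq> \<nat>\<close>, the sequence \<open>d\<^sub>n = 1\<^sub>A(n) (e(q\<^sub>n) - e(p\<^sub>n))\<close> is the
  difference of two subsequences of \<open>(e\<^sub>n)\<close>, hence dominated by \<open>(e\<^sub>n)\<close>. A gliding hump
  argument makes the domination constant independent of \<open>A\<close>, and convexity extends it to
  all multipliers \<open>t \<in> \<ell>\<^sub>\<infinity>\<close>. The operators \<open>T t : e\<^sub>n \<mapsto> t\<^sub>n (e(q\<^sub>n) - e(p\<^sub>n))\<close> then depend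
  linearly and boundedly on \<open>t\<close>, and \<open>\<parallel>T t e\<^sub>n\<parallel> \<ge> \<delta> \<bar>t\<^sub>n\<bar>\<close> bounds \<open>T\<close> from below.
\<close>

definition schauder_coeff :: "(nat \<Rightarrow> 'a::real_normed_vector) \<Rightarrow> 'a \<Rightarrow> nat \<Rightarrow> real" where
  "schauder_coeff e x = (THE a. (\<lambda>n. a n *\<^sub>R e n) sums x)"

lemma schauder_basis_ex1: "schauder_basis e \<Longrightarrow> \<exists>!a. (\<lambda>n. a n *\<^sub>R e n) sums x"
  unfolding schauder_basis_def by blast

lemma schauder_coeff_sums:
  "schauder_basis e \<Longrightarrow> (\<lambda>n. schauder_coeff e x n *\<^sub>R e n) sums x"
  unfolding schauder_coeff_def by (rule theI'[OF schauder_basis_ex1])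

lemma schauder_coeff_unique:
  "schauder_basis e \<Longrightarrow> (\<lambda>n. a n *\<^sub>R e n) sums x \<Longrightarrow> schauder_coeff e x = a"
  unfolding schauder_coeff_def by (rule the1_equality[OF schauder_basis_ex1])

lemma schauder_coeff_add:
  assumes b: "schauder_basis e"
  shows "schauder_coeff e (x + y) = (\<lambda>n. schauder_coeff e x n + schauder_coeff e y n)"
proof (rule schauder_coeff_unique[OF b])
  show "(\<lambda>n. (schauder_coeff e x n + schauder_coeff e y n) *\<^sub>R e n) sums (x + y)"
    using sums_add[OF schauder_coeff_sums[OF b, of x] schauder_coeff_sums[OF b, of y]]
    by (simp add: scaleR_add_left)
qed

lemma schauder_coeff_scaleR:
  assumes b: "schauder_basis e"
  shows "schauder_coeff e (r *\<^sub>R x) = (\<lambda>n. r * schauder_coeff e x n)"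
proof (rule schauder_coeff_unique[OF b])
  show "(\<lambda>n. (r * schauder_coeff e x n) *\<^sub>R e n) sums (r *\<^sub>R x)"
    using sums_scaleR_right[OF schauder_coeff_sums[OF b, of x], of r] by simp
qed

lemma schauder_coeff_basis:
  assumes b: "schauder_basis e"
  shows "schauder_coeff e (e m) = (\<lambda>n. if n = m then 1 else 0)"
proof (rule schauder_coeff_unique[OF b])
  have "(\<lambda>n. (if n = m then 1 else 0) *\<^sub>R e n) = (\<lambda>n. if n = m then e m else 0)"
    by auto
  then show "(\<lambda>n. (if n = m then 1 else 0) *\<^sub>R e n) sums e m"
    using sums_single[of m "\<lambda>_. e m"] by simp
qed

definition dominates_with ::
    "(nat \<Rightarrow> 'a::real_normed_vector) \<Rightarrow> (nat \<Rightarrow> 'b::real_normed_vector) \<Rightarrow> real \<Rightarrow> bool" where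
  "dominates_with x y C \<longleftrightarrow>
     (\<forall>(a::nat \<Rightarrow> real) N. norm (\<Sum>n<N. a n *\<^sub>R y n) \<le> C * norm (\<Sum>n<N. a n *\<^sub>R x n))"

lemma dominates_iff_dominates_with: "dominates x y \<longleftrightarrow> (\<exists>C>0. dominates_with x y C)"
  by (simp only: dominates_def dominates_with_def)

lemma dominates_withD:
  "dominates_with x y C \<Longrightarrow> norm (\<Sum>n<N. a n *\<^sub>R y n) \<le> C * norm (\<Sum>n<N. a n *\<^sub>R x n)"
  unfolding dominates_with_def by blast

lemma dominates_with_mono:
  assumes "dominates_with x y C" and "C \<le> C'"
  shows "dominates_with x y C'"
  unfolding dominates_with_def
proof (intro allI)
  fix a :: "nat \<Rightarrow> real" and N
  have "C * norm (\<Sum>n<N. a n *\<^sub>R x n) \<le> C' * norm (\<Sum>n<N. a n *\<^sub>R x n)"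
    using assms(2) by (rule mult_right_mono) simp
  then show "norm (\<Sum>n<N. a n *\<^sub>R y n) \<le> C' * norm (\<Sum>n<N. a n *\<^sub>R x n)"
    using dominates_withD[OF assms(1)] by (rule order_trans[rotated])
qed

lemma dominates_with_add:
  assumes "dominates_with x y C" and "dominates_with x z D"
  shows "dominates_with x (\<lambda>n. y n + z n) (C + D)"
  unfolding dominates_with_def
proof (intro allI)
  fix a :: "nat \<Rightarrow> real" and N
  have "norm (\<Sum>n<N. a n *\<^sub>R (y n + z n)) \<le> norm (\<Sum>n<N. a n *\<^sub>R y n) + norm (\<Sum>n<N. a n *\<^sub>R z n)"
    by (simp add: scaleR_add_right sum.distrib norm_triangle_ineq)
  also have "\<dots> \<le> (C + D) * norm (\<Sum>n<N. a n *\<^sub>R x n)"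
    using dominates_withD[OF assms(1)] dominates_withD[OF assms(2)] by (simp add: distrib_right add_mono)
  finally show "norm (\<Sum>n<N. a n *\<^sub>R (y n + z n)) \<le> (C + D) * norm (\<Sum>n<N. a n *\<^sub>R x n)" .
qed

lemma dominates_with_scaleR:
  assumes "dominates_with x y C"
  shows "dominates_with x (\<lambda>n. r *\<^sub>R y n) (\<bar>r\<bar> * C)"
  unfolding dominates_with_def
proof (intro allI)
  fix a :: "nat \<Rightarrow> real" and N
  have "(\<Sum>n<N. a n *\<^sub>R r *\<^sub>R y n) = r *\<^sub>R (\<Sum>n<N. a n *\<^sub>R y n)"
    by (simp add: scaleR_sum_right mult.commute)
  then have "norm (\<Sum>n<N. a n *\<^sub>R r *\<^sub>R y n) = \<bar>r\<bar> * norm (\<Sum>n<N. a n *\<^sub>R y n)"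
    by simp
  also have "\<dots> \<le> \<bar>r\<bar> * C * norm (\<Sum>n<N. a n *\<^sub>R x n)"
    using dominates_withD[OF assms] by (simp add: mult.assoc mult_left_mono)
  finally show "norm (\<Sum>n<N. a n *\<^sub>R r *\<^sub>R y n) \<le> \<bar>r\<bar> * C * norm (\<Sum>n<N. a n *\<^sub>R x n)" .
qed

lemma dominates_with_diff:
  assumes "dominates_with x y C" and "dominates_with x z D"
  shows "dominates_with x (\<lambda>n. y n - z n) (C + D)"
  using dominates_with_add[OF assms(1) dominates_with_scaleR[OF assms(2), of "-1"]] by simp

lemma dominates_with_segment:
  assumes "dominates_with x y C"
  shows "norm (\<Sum>n\<in>{m..<k}. a n *\<^sub>R y n) \<le> C * norm (\<Sum>n\<in>{m..<k}. a n *\<^sub>R x n)"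
proof -
  have tail: "(\<Sum>n<k. (if m \<le> n then a n else 0) *\<^sub>R z n) = (\<Sum>n\<in>{m..<k}. a n *\<^sub>R z n)"
    for z :: "nat \<Rightarrow> 'c::real_normed_vector"
  proof -
    have "(\<Sum>n<k. (if m \<le> n then a n else 0) *\<^sub>R z n)
        = (\<Sum>n\<in>{..<k}. if n \<in> {m..<k} then a n *\<^sub>R z n else 0)"
      by (rule sum.cong) auto
    also have "\<dots> = (\<Sum>n\<in>{..<k} \<inter> {m..<k}. a n *\<^sub>R z n)"
      by (simp add: sum.inter_restrict)
    also have "{..<k} \<inter> {m..<k} = {m..<k}"
      by auto
    finally show ?thesis .
  qed
  show ?thesis
    using dominates_withD[OF assms, where N=k and a="\<lambda>n. if m \<le> n then a n else 0"] unfolding tail .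
qed

definition basis_map ::
    "(nat \<Rightarrow> 'a::real_normed_vector) \<Rightarrow> (nat \<Rightarrow> 'b::real_normed_vector) \<Rightarrow> 'a \<Rightarrow> 'b" where
  "basis_map e f x = (\<Sum>n. schauder_coeff e x n *\<^sub>R f n)"

lemma summable_basis_map:
  fixes e :: "nat \<Rightarrow> 'a::banach" and f :: "nat \<Rightarrow> 'b::banach"
  assumes b: "schauder_basis e" and d: "dominates_with e f C"
  shows "summable (\<lambda>n. schauder_coeff e x n *\<^sub>R f n)"
  unfolding summable_Cauchy
proof (intro allI impI)
  fix r :: real assume "r > 0"
  define C' where "C' = max C 1"
  have "C' > 0" and C': "dominates_with e f C'"
    using dominates_with_mono[OF d] by (auto simp: C'_def)
  have "summable (\<lambda>n. schauder_coeff e x n *\<^sub>R e n)"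
    using schauder_coeff_sums[OF b] by (rule sums_summable)
  moreover have "r / C' > 0"
    using \<open>r > 0\<close> \<open>C' > 0\<close> by simp
  ultimately obtain N where N: "\<forall>m\<ge>N. \<forall>k. norm (\<Sum>n\<in>{m..<k}. schauder_coeff e x n *\<^sub>R e n) < r / C'"
    unfolding summable_Cauchy by blast
  show "\<exists>N. \<forall>m\<ge>N. \<forall>k. norm (\<Sum>n\<in>{m..<k}. schauder_coeff e x n *\<^sub>R f n) < r"
  proof (intro exI allI impI)
    fix m k assume "N \<le> m"
    have "norm (\<Sum>n\<in>{m..<k}. schauder_coeff e x n *\<^sub>R f n)
        \<le> C' * norm (\<Sum>n\<in>{m..<k}. schauder_coeff e x n *\<^sub>R e n)"
      using C' by (rule dominates_with_segment)
    also have "\<dots> < C' * (r / C')"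
      using N \<open>N \<le> m\<close> \<open>C' > 0\<close> by (intro mult_strict_left_mono) auto
    also have "\<dots> = r"
      using \<open>C' > 0\<close> by simp
    finally show "norm (\<Sum>n\<in>{m..<k}. schauder_coeff e x n *\<^sub>R f n) < r" .
  qed
qed

lemma basis_map_sums:
  fixes e :: "nat \<Rightarrow> 'a::banach" and f :: "nat \<Rightarrow> 'b::banach"
  assumes "schauder_basis e" and "dominates_with e f C"
  shows "(\<lambda>n. schauder_coeff e x n *\<^sub>R f n) sums basis_map e f x"
  unfolding basis_map_def using summable_basis_map[OF assms] by (rule summable_sums)

lemma norm_basis_map_le:
  fixes e :: "nat \<Rightarrow> 'a::banach" and f :: "nat \<Rightarrow> 'b::banach"
  assumes b: "schauder_basis e" and C: "dominates_with e f C"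
  shows "norm (basis_map e f x) \<le> C * norm x"
proof (rule LIMSEQ_le)
  show "(\<lambda>N. norm (\<Sum>n<N. schauder_coeff e x n *\<^sub>R f n)) \<longlonglongrightarrow> norm (basis_map e f x)"
    using basis_map_sums[OF b C] unfolding sums_def by (rule tendsto_norm)
  show "(\<lambda>N. C * norm (\<Sum>n<N. schauder_coeff e x n *\<^sub>R e n)) \<longlonglongrightarrow> C * norm x"
    using schauder_coeff_sums[OF b] unfolding sums_def by (intro tendsto_mult_left tendsto_norm)
  show "\<exists>N. \<forall>k\<ge>N. norm (\<Sum>n<k. schauder_coeff e x n *\<^sub>R f n) \<le> C * norm (\<Sum>n<k. schauder_coeff e x n *\<^sub>R e n)"
    using dominates_withD[OF C] by blast
qed

lemma basis_map_add:
  fixes e :: "nat \<Rightarrow> 'a::banach" and f g :: "nat \<Rightarrow> 'b::banach"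
  assumes b: "schauder_basis e" and f: "dominates_with e f C" and g: "dominates_with e g D"
  shows "basis_map e (\<lambda>n. f n + g n) x = basis_map e f x + basis_map e g x"
  using suminf_add[OF summable_basis_map[OF b f] summable_basis_map[OF b g]]
  by (simp add: basis_map_def scaleR_add_right)

lemma basis_map_scaleR:
  fixes e :: "nat \<Rightarrow> 'a::banach" and f :: "nat \<Rightarrow> 'b::banach"
  assumes b: "schauder_basis e" and f: "dominates_with e f C"
  shows "basis_map e (\<lambda>n. r *\<^sub>R f n) x = r *\<^sub>R basis_map e f x"
  using suminf_scaleR_right[OF summable_basis_map[OF b f], of r]
  by (simp add: basis_map_def mult.commute)

lemma bounded_linear_basis_map:
  fixes e :: "nat \<Rightarrow> 'a::banach" and f :: "nat \<Rightarrow> 'b::banach"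
  assumes b: "schauder_basis e" and d: "dominates_with e f C"
  shows "bounded_linear (basis_map e f)"
proof (rule bounded_linear_intro[where K=C])
  fix x y
  show "basis_map e f (x + y) = basis_map e f x + basis_map e f y"
    using sums_add[OF basis_map_sums[OF b d, of x] basis_map_sums[OF b d, of y]]
    by (intro sums_unique2[OF basis_map_sums[OF b d]]) (simp add: schauder_coeff_add[OF b] scaleR_add_left)
next
  fix r x
  show "basis_map e f (r *\<^sub>R x) = r *\<^sub>R basis_map e f x"
    using sums_scaleR_right[OF basis_map_sums[OF b d, of x], of r]
    by (intro sums_unique2[OF basis_map_sums[OF b d]]) (simp add: schauder_coeff_scaleR[OF b])
next
  fix x
  show "norm (basis_map e f x) \<le> norm x * C"
    using norm_basis_map_le[OF b d] by (simp add: mult.commute)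
qed

lemma basis_map_basis:
  assumes b: "schauder_basis e"
  shows "basis_map e f (e m) = f m"
proof -
  have "(\<lambda>n. schauder_coeff e (e m) n *\<^sub>R f n) = (\<lambda>n. if n = m then f m else 0)"
    by (simp add: schauder_coeff_basis[OF b] fun_eq_iff)
  then show ?thesis
    using sums_single[of m "\<lambda>_. f m"] unfolding basis_map_def by (simp add: sums_iff)
qed

lemma quasisubsymmetric_dominates_subseq:
  assumes "quasisubsymmetric e" and "strict_mono l"
  shows "dominates e (e \<circ> l)"
proof -
  have "dominates (e \<circ> id) (e \<circ> l)"
    using assms(1)[unfolded quasisubsymmetric_def, rule_format, of id l] assms(2)
    by (simp add: strict_mono_def strict_mono_imp_increasing)
  then show ?thesis
    by simp
qed

lemma shift_dominated_basis_limit_eq_0: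
  fixes e :: "nat \<Rightarrow> 'a::banach"
  assumes b: "schauder_basis e" and d: "dominates_with e (\<lambda>n. e (Suc n)) C"
    and lim: "e \<longlonglongrightarrow> y"
  shows "y = 0"
proof -
  let ?S = "basis_map e (\<lambda>n. e (Suc n))" and ?c = "schauder_coeff e y"
  have "(\<lambda>m. ?S (e m)) \<longlonglongrightarrow> ?S y"
    using bounded_linear_basis_map[OF b d] lim by (rule bounded_linear.tendsto)
  moreover have "(\<lambda>m. ?S (e m)) \<longlonglongrightarrow> y"
    using LIMSEQ_Suc[OF lim] by (simp add: basis_map_basis[OF b])
  ultimately have "?S y = y"
    by (rule LIMSEQ_unique)
  then have "(\<lambda>n. ?c n *\<^sub>R e (Suc n)) sums y"
    using basis_map_sums[OF b d, of y] by simp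
  txt \<open>So the coefficients of \<open>y\<close> satisfy \<open>c\<^sub>0 = 0\<close> and \<open>c\<^sub>n\<^sub>+\<^sub>1 = c\<^sub>n\<close>.\<close>
  then have "(\<lambda>n. case_nat 0 ?c n *\<^sub>R e n) sums y"
    using sums_Suc_iff[of "\<lambda>n. case_nat 0 ?c n *\<^sub>R e n" y] by simp
  then have "?c = case_nat 0 ?c"
    by (rule schauder_coeff_unique[OF b])
  then have "?c 0 = 0" and "?c (Suc n) = ?c n" for n
    by (metis nat.case(1), metis nat.case(2))
  then have "?c n = 0" for n
    by (induction n) simp_all
  then show "y = 0"
    using schauder_coeff_sums[OF b, of y] by (simp add: sums_0 sums_unique2)
qed

lemma quasisubsymmetric_basis_not_Cauchy:
  fixes e :: "nat \<Rightarrow> 'a::banach"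
  assumes b: "schauder_basis e" and "seminormalized e" and qs: "quasisubsymmetric e"
  shows "\<not> Cauchy e"
proof
  assume "Cauchy e"
  then obtain y where lim: "e \<longlonglongrightarrow> y"
    unfolding Cauchy_convergent_iff convergent_def by blast
  obtain c where "c > 0" and c: "\<And>n. c \<le> norm (e n)"
    using \<open>seminormalized e\<close> unfolding seminormalized_def by blast
  have "c \<le> norm y"
    by (rule LIMSEQ_le_const[OF tendsto_norm[OF lim]]) (use c in auto)
  moreover obtain C where "dominates_with e (\<lambda>n. e (Suc n)) C"
    using quasisubsymmetric_dominates_subseq[OF qs, of Suc]
    unfolding dominates_iff_dominates_with by (auto simp: comp_def strict_mono_Suc_iff)
  then have "y = 0"
    using shift_dominated_basis_limit_eq_0[OF b _ lim] by blast
  ultimately show False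
    using \<open>c > 0\<close> by simp
qed

lemma not_Cauchy_separated_pairs:
  fixes e :: "nat \<Rightarrow> 'a::metric_space"
  assumes "\<not> Cauchy e"
  obtains \<delta> p q where "\<delta> > 0" and "\<And>n. p n < q n" and "\<And>n. q n < p (Suc n)"
    and "\<And>n. \<delta> \<le> dist (e (q n)) (e (p n))"
proof -
  obtain \<delta> where "\<delta> > 0" and \<delta>: "\<And>M. \<exists>m\<ge>M. \<exists>n\<ge>M. \<delta> \<le> dist (e m) (e n)"
    using assms unfolding Cauchy_def by (meson not_less)
  have far: "\<exists>i j. M \<le> i \<and> i < j \<and> \<delta> \<le> dist (e j) (e i)" for M
  proof -
    obtain m n where "m \<ge> M" "n \<ge> M" "\<delta> \<le> dist (e m) (e n)"
      using \<delta> by blast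
    moreover have "m \<noteq> n"
      using \<open>\<delta> > 0\<close> \<open>\<delta> \<le> dist (e m) (e n)\<close> by auto
    ultimately show ?thesis
      by (metis dist_commute linorder_neqE_nat)
  qed
  obtain pq where "\<And>n. fst (pq n) < snd (pq n) \<and> \<delta> \<le> dist (e (snd (pq n))) (e (fst (pq n)))
      \<and> snd (pq n) < fst (pq (Suc n))"
    using dependent_nat_choice[where P="\<lambda>_ ij. fst ij < snd ij \<and> \<delta> \<le> dist (e (snd ij)) (e (fst ij))"
        and Q="\<lambda>_ ij ij'. snd ij < fst ij'"]
    using far[of 0] far[of "Suc _"] by (fastforce simp: Suc_le_eq)
  then show thesis
    using \<open>\<delta> > 0\<close> by (intro that[of \<delta> "fst \<circ> pq" "snd \<circ> pq"]) auto
qed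

lemma Union_Int_lessThan_coherent:
  fixes F :: "nat \<Rightarrow> nat set" and N :: "nat \<Rightarrow> nat"
  assumes F: "\<And>j. F j \<subseteq> {..<N j}" and coherent: "\<And>j. F (Suc j) \<inter> {..<N j} = F j"
    and N: "\<And>j. N j \<le> N (Suc j)"
  shows "(\<Union>j. F j) \<inter> {..<N k} = F k"
proof -
  have later: "F j \<inter> {..<N k} = F k" if "k \<le> j" for j k
    using that
  proof (induction j rule: dec_induct)
    case base
    show ?case
      using F by blast
  next
    case (step j)
    have "N k \<le> N j"
      using step.hyps N by (simp add: incseq_SucI incseqD)
    then have "F (Suc j) \<inter> {..<N k} = (F (Suc j) \<inter> {..<N j}) \<inter> {..<N k}"
      by auto
    then show ?case
      using coherent step.IH by simp
  qed
  show ?thesis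
  proof
    show "(\<Union>j. F j) \<inter> {..<N k} \<subseteq> F k"
    proof clarify
      fix i j assume "i \<in> F j" "i < N k"
      show "i \<in> F k"
      proof (cases "k \<le> j")
        case True
        then show ?thesis
          using later \<open>i \<in> F j\<close> \<open>i < N k\<close> by blast
      next
        case False
        then have "F k \<inter> {..<N j} = F j"
          by (intro later) simp
        then show ?thesis
          using \<open>i \<in> F j\<close> by blast
      qed
    qed
    show "F k \<subseteq> (\<Union>j. F j) \<inter> {..<N k}"
      using F by blast
  qed
qed

lemma dominates_with_indicator_cylinder:
  fixes e :: "nat \<Rightarrow> 'a::real_normed_vector" and d :: "nat \<Rightarrow> 'b::real_normed_vector"
  assumes each: "\<And>A. \<exists>K. dominates_with e (\<lambda>n. indicator A n *\<^sub>R d n) K"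
    and F: "F \<subseteq> {..<N}"
    and cylinder: "\<And>A. A \<inter> {..<N} = F \<Longrightarrow> dominates_with e (\<lambda>n. indicator A n *\<^sub>R d n) K"
  shows "\<exists>K'. \<forall>A. dominates_with e (\<lambda>n. indicator A n *\<^sub>R d n) K'"
proof -
  obtain CC where CC: "\<And>G. dominates_with e (\<lambda>n. indicator G n *\<^sub>R d n) (CC G)"
    using each by metis
  define K' where "K' = 2 * K + (\<Sum>G\<in>Pow {..<N}. \<bar>CC G\<bar>)"
  have "dominates_with e (\<lambda>n. indicator A n *\<^sub>R d n) K'" for A
  proof -
    txt \<open>\<open>A'\<close> lies in the cylinder, and \<open>G\<close> ranges over the finitely many subsets of \<open>{..<N}\<close>.\<close>
    define A' where "A' = F \<union> (A - {..<N})"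
    define G where "G = A \<inter> {..<N}"
    have "(\<lambda>n. indicator A n *\<^sub>R d n)
        = (\<lambda>n. (indicator A' n *\<^sub>R d n - indicator F n *\<^sub>R d n) + indicator G n *\<^sub>R d n)"
      using F by (auto simp: fun_eq_iff indicator_def A'_def G_def)
    moreover have "dominates_with e \<dots> ((K + K) + CC G)"
      using F by (intro dominates_with_add dominates_with_diff cylinder CC) (auto simp: A'_def)
    moreover have "\<bar>CC G\<bar> \<le> (\<Sum>G\<in>Pow {..<N}. \<bar>CC G\<bar>)"
      by (rule member_le_sum) (auto simp: G_def)
    ultimately show ?thesis
      by (auto simp: K'_def intro: dominates_with_mono)
  qed
  then show ?thesis
    by blast
qed

lemma not_dominates_with_indicator_truncate:
  assumes "\<not> dominates_with e (\<lambda>n. indicator A n *\<^sub>R d n) K"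
  obtains M a where "\<And>N'. M \<le> N' \<Longrightarrow>
    K * norm (\<Sum>n<M. a n *\<^sub>R e n) < norm (\<Sum>n<M. a n *\<^sub>R indicator (A \<inter> {..<N'}) n *\<^sub>R d n)"
proof -
  obtain a M where violation:
    "K * norm (\<Sum>n<M. a n *\<^sub>R e n) < norm (\<Sum>n<M. a n *\<^sub>R indicator A n *\<^sub>R d n)"
    using assms unfolding dominates_with_def not_all not_le by blast
  show thesis
  proof (rule that)
    fix N' assume "M \<le> N'"
    then have "(\<Sum>n<M. a n *\<^sub>R indicator A n *\<^sub>R d n)
        = (\<Sum>n<M. a n *\<^sub>R indicator (A \<inter> {..<N'}) n *\<^sub>R d n)"
      by (intro sum.cong) (auto simp: indicator_def)
    then show "K * norm (\<Sum>n<M. a n *\<^sub>R e n)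
        < norm (\<Sum>n<M. a n *\<^sub>R indicator (A \<inter> {..<N'}) n *\<^sub>R d n)"
      using violation by simp
  qed
qed

lemma gliding_hump_unbounded_indicator:
  fixes e :: "nat \<Rightarrow> 'a::real_normed_vector" and d :: "nat \<Rightarrow> 'b::real_normed_vector"
  assumes cylinders: "\<And>F N k. F \<subseteq> {..<N} \<Longrightarrow>
    \<exists>A. A \<inter> {..<N} = F \<and> \<not> dominates_with e (\<lambda>n. indicator A n *\<^sub>R d n) (real k)"
  shows "\<exists>A. \<forall>K. \<not> dominates_with e (\<lambda>n. indicator A n *\<^sub>R d n) K"
proof -
  txt \<open>Build finite sets \<open>F\<^sub>k \<subseteq> {..<N\<^sub>k}\<close>, each extending the previous one, such that
    \<open>F\<^sub>k\<^sub>+\<^sub>1\<close> already violates the bound \<open>k\<close> on coefficients below \<open>N\<^sub>k\<^sub>+\<^sub>1\<close>;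
    their union then violates every bound.\<close>
  define P :: "nat \<Rightarrow> nat set \<times> nat \<Rightarrow> bool" where "P k FN \<longleftrightarrow> fst FN \<subseteq> {..<snd FN}" for k FN
  define Q :: "nat \<Rightarrow> nat set \<times> nat \<Rightarrow> nat set \<times> nat \<Rightarrow> bool" where
    "Q k FN FN' \<longleftrightarrow> fst FN' \<inter> {..<snd FN} = fst FN \<and> snd FN \<le> snd FN' \<and>
       (\<exists>a M. M \<le> snd FN' \<and>
          real k * norm (\<Sum>n<M. a n *\<^sub>R e n) < norm (\<Sum>n<M. a n *\<^sub>R indicator (fst FN') n *\<^sub>R d n))"
    for k FN FN'
  have "\<exists>FN'. P (Suc k) FN' \<and> Q k FN FN'" if "P k FN" for k FN
  proof -
    have "fst FN \<subseteq> {..<snd FN}"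
      using that by (simp add: P_def)
    then obtain A where A: "A \<inter> {..<snd FN} = fst FN"
      and unbounded: "\<not> dominates_with e (\<lambda>n. indicator A n *\<^sub>R d n) (real k)"
      using cylinders[of "fst FN" "snd FN" k] by blast
    obtain M a where violation: "\<And>N'. M \<le> N' \<Longrightarrow> real k * norm (\<Sum>n<M. a n *\<^sub>R e n)
        < norm (\<Sum>n<M. a n *\<^sub>R indicator (A \<inter> {..<N'}) n *\<^sub>R d n)"
      using not_dominates_with_indicator_truncate[OF unbounded] by blast
    define N' where "N' = snd FN + M"
    have "A \<inter> {..<N'} \<inter> {..<snd FN} = A \<inter> {..<snd FN}"
      by (auto simp: N'_def)
    then have "A \<inter> {..<N'} \<inter> {..<snd FN} = fst FN"
      using A by simp
    moreover have "M \<le> N'" and "snd FN \<le> N'"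
      by (simp_all add: N'_def)
    ultimately have "Q k FN (A \<inter> {..<N'}, N')"
      unfolding Q_def fst_conv snd_conv using violation by blast
    moreover have "P (Suc k) (A \<inter> {..<N'}, N')"
      by (simp add: P_def)
    ultimately show ?thesis
      by blast
  qed
  moreover have "P 0 ({}, 0)"
    by (simp add: P_def)
  ultimately obtain FN where FN: "\<And>k. P k (FN k) \<and> Q k (FN k) (FN (Suc k))"
    using dependent_nat_choice[of P Q] by blast
  define F where "F k = fst (FN k)" for k
  define N where "N k = snd (FN k)" for k
  have glued: "(\<Union>j. F j) \<inter> {..<N k} = F k" for k
    using FN unfolding P_def Q_def F_def N_def by (intro Union_Int_lessThan_coherent) auto
  have "\<not> dominates_with e (\<lambda>n. indicator (\<Union>j. F j) n *\<^sub>R d n) K" for K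
  proof
    assume K: "dominates_with e (\<lambda>n. indicator (\<Union>j. F j) n *\<^sub>R d n) K"
    obtain k :: nat where "K \<le> real k"
      using real_arch_simple by blast
    obtain a M where "M \<le> N (Suc k)" and violation:
      "real k * norm (\<Sum>n<M. a n *\<^sub>R e n) < norm (\<Sum>n<M. a n *\<^sub>R indicator (F (Suc k)) n *\<^sub>R d n)"
      using FN[of k] unfolding Q_def F_def N_def by blast
    have "n \<in> F (Suc k) \<longleftrightarrow> n \<in> (\<Union>j. F j)" if "n < M" for n
    proof -
      have "n \<in> {..<N (Suc k)}"
        using that \<open>M \<le> N (Suc k)\<close> by simp
      then show ?thesis
        using glued[of "Suc k"] by blast
    qed
    then have "(\<Sum>n<M. a n *\<^sub>R indicator (F (Suc k)) n *\<^sub>R d n)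
        = (\<Sum>n<M. a n *\<^sub>R indicator (\<Union>j. F j) n *\<^sub>R d n)"
      by (intro sum.cong) (simp_all add: indicator_def)
    also have "norm \<dots> \<le> K * norm (\<Sum>n<M. a n *\<^sub>R e n)"
      using K by (rule dominates_withD)
    also have "\<dots> \<le> real k * norm (\<Sum>n<M. a n *\<^sub>R e n)"
      using \<open>K \<le> real k\<close> by (rule mult_right_mono) simp
    finally show False
      using violation by simp
  qed
  then show ?thesis
    by blast
qed

lemma dominates_with_indicator_uniform:
  fixes e :: "nat \<Rightarrow> 'a::real_normed_vector" and d :: "nat \<Rightarrow> 'b::real_normed_vector"
  assumes each: "\<And>A. \<exists>K. dominates_with e (\<lambda>n. indicator A n *\<^sub>R d n) K"
  shows "\<exists>K\<ge>0. \<forall>A. dominates_with e (\<lambda>n. indicator A n *\<^sub>R d n) K"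
proof (rule ccontr)
  assume unbounded: "\<not> ?thesis"
  have "\<exists>A. A \<inter> {..<N} = F \<and> \<not> dominates_with e (\<lambda>n. indicator A n *\<^sub>R d n) (real k)"
    if F: "F \<subseteq> {..<N}" for F N k
  proof (rule ccontr)
    assume "\<not> ?thesis"
    then have "dominates_with e (\<lambda>n. indicator A n *\<^sub>R d n) (real k)" if "A \<inter> {..<N} = F" for A
      using that by blast
    then obtain K where "\<forall>A. dominates_with e (\<lambda>n. indicator A n *\<^sub>R d n) K"
      using dominates_with_indicator_cylinder[OF each F] by blast
    then have "\<forall>A. dominates_with e (\<lambda>n. indicator A n *\<^sub>R d n) (max K 0)"
      by (auto intro: dominates_with_mono)
    moreover have "0 \<le> max K 0"
      by simp
    ultimately show False
      using unbounded by blast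
  qed
  from gliding_hump_unbounded_indicator[OF this] obtain A
    where "\<forall>K. \<not> dominates_with e (\<lambda>n. indicator A n *\<^sub>R d n) K"
    by blast
  then show False
    using each by blast
qed

lemma norm_add_sum_scaleR_le_subset_sums:
  fixes v :: "nat \<Rightarrow> 'a::real_normed_vector"
  assumes s: "\<And>n. 0 \<le> s n" "\<And>n. s n \<le> 1"
    and subset_sums: "\<And>A. A \<subseteq> {..<N} \<Longrightarrow> norm (w + (\<Sum>n\<in>A. v n)) \<le> K"
  shows "norm (w + (\<Sum>n<N. s n *\<^sub>R v n)) \<le> K"
  using subset_sums
proof (induction N arbitrary: w)
  case 0
  then show ?case
    using "0.prems"[of "{}"] by simp
next
  case (Suc N)
  let ?S = "\<Sum>n<N. s n *\<^sub>R v n"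
  have without_N: "norm (w + ?S) \<le> K"
  proof (rule Suc.IH)
    fix A assume "A \<subseteq> {..<N}"
    then have "A \<subseteq> {..<Suc N}"
      by auto
    then show "norm (w + (\<Sum>n\<in>A. v n)) \<le> K"
      by (rule Suc.prems)
  qed
  have with_N: "norm ((w + v N) + ?S) \<le> K"
  proof (rule Suc.IH)
    fix A assume A: "A \<subseteq> {..<N}"
    then have "(\<Sum>n\<in>insert N A. v n) = v N + (\<Sum>n\<in>A. v n)"
      by (subst sum.insert) (auto intro: finite_subset)
    moreover have "insert N A \<subseteq> {..<Suc N}"
      using A by auto
    ultimately show "norm (w + v N + (\<Sum>n\<in>A. v n)) \<le> K"
      using Suc.prems[of "insert N A"] by (simp add: add.assoc)
  qed
  have "w + (\<Sum>n<Suc N. s n *\<^sub>R v n) = (1 - s N) *\<^sub>R (w + ?S) + s N *\<^sub>R ((w + v N) + ?S)"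
    by (simp add: algebra_simps)
  also have "norm \<dots> \<le> (1 - s N) * norm (w + ?S) + s N * norm ((w + v N) + ?S)"
    using s[of N] by (auto intro: order_trans[OF norm_triangle_ineq] simp: abs_of_nonneg)
  also have "\<dots> \<le> (1 - s N) * K + s N * K"
    using s[of N] without_N with_N by (intro add_mono mult_left_mono) auto
  finally show ?case
    by (simp add: algebra_simps)
qed

lemma dominates_with_fractional_indicator:
  fixes e :: "nat \<Rightarrow> 'a::real_normed_vector" and d :: "nat \<Rightarrow> 'b::real_normed_vector"
  assumes K: "\<And>A. dominates_with e (\<lambda>n. indicator A n *\<^sub>R d n) K"
    and s: "\<And>n. 0 \<le> s n" "\<And>n. s n \<le> 1"
  shows "dominates_with e (\<lambda>n. s n *\<^sub>R d n) K"
  unfolding dominates_with_def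
proof (intro allI)
  fix a :: "nat \<Rightarrow> real" and N
  have "norm (0 + (\<Sum>n<N. s n *\<^sub>R (a n *\<^sub>R d n))) \<le> K * norm (\<Sum>n<N. a n *\<^sub>R e n)"
  proof (rule norm_add_sum_scaleR_le_subset_sums[OF s])
    fix A assume "A \<subseteq> {..<N}"
    have "(\<Sum>n<N. a n *\<^sub>R indicator A n *\<^sub>R d n) = (\<Sum>n\<in>{..<N}. if n \<in> A then a n *\<^sub>R d n else 0)"
      by (rule sum.cong) (auto simp: indicator_def)
    also have "\<dots> = (\<Sum>n\<in>{..<N} \<inter> A. a n *\<^sub>R d n)"
      by (simp add: sum.inter_restrict)
    also have "{..<N} \<inter> A = A"
      using \<open>A \<subseteq> {..<N}\<close> by blast
    finally show "norm (0 + (\<Sum>n\<in>A. a n *\<^sub>R d n)) \<le> K * norm (\<Sum>n<N. a n *\<^sub>R e n)"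
      using dominates_withD[OF K] by (metis add_0_left)
  qed
  then show "norm (\<Sum>n<N. a n *\<^sub>R s n *\<^sub>R d n) \<le> K * norm (\<Sum>n<N. a n *\<^sub>R e n)"
    by (simp add: mult.commute)
qed

lemma dominates_with_bounded_multiplier:
  fixes e :: "nat \<Rightarrow> 'a::real_normed_vector" and d :: "nat \<Rightarrow> 'b::real_normed_vector"
  assumes K: "\<And>A. dominates_with e (\<lambda>n. indicator A n *\<^sub>R d n) K"
    and t: "\<And>n. \<bar>t n\<bar> \<le> M"
  shows "dominates_with e (\<lambda>n. t n *\<^sub>R d n) (2 * M * K)"
proof (cases "M = 0")
  case True
  then show ?thesis
    using t by (simp add: dominates_with_def)
next
  case False
  then have "M > 0"
    using t[of 0] by linarith
  define s_plus where "s_plus n = max (t n) 0 / M" for n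
  define s_minus where "s_minus n = max (- t n) 0 / M" for n
  have "dominates_with e (\<lambda>n. M *\<^sub>R (s_plus n *\<^sub>R d n) - M *\<^sub>R (s_minus n *\<^sub>R d n))
      (\<bar>M\<bar> * K + \<bar>M\<bar> * K)"
    using t \<open>M > 0\<close>
    by (intro dominates_with_diff dominates_with_scaleR dominates_with_fractional_indicator[OF K])
      (auto simp: s_plus_def s_minus_def abs_le_iff)
  moreover have "M *\<^sub>R (s_plus n *\<^sub>R d n) - M *\<^sub>R (s_minus n *\<^sub>R d n) = t n *\<^sub>R d n" for n
    using \<open>M > 0\<close> by (simp add: s_plus_def s_minus_def flip: scaleR_diff_left) linarith
  ultimately show ?thesis
    using \<open>M > 0\<close> by (simp add: mult_ac)
qed

definition multiplier_operator :: "(nat \<Rightarrow> 'a::real_normed_vector) \<Rightarrow> (nat \<Rightarrow> 'b::real_normed_vector)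
    \<Rightarrow> (nat \<Rightarrow>\<^sub>C real) \<Rightarrow> 'a \<Rightarrow>\<^sub>L 'b"
  where "multiplier_operator e d t = Blinfun (basis_map e (\<lambda>n. t n *\<^sub>R d n))"

lemma dominates_with_multiplier:
  fixes e :: "nat \<Rightarrow> 'a::real_normed_vector" and d :: "nat \<Rightarrow> 'b::real_normed_vector"
    and t :: "nat \<Rightarrow>\<^sub>C real"
  assumes "\<And>A. dominates_with e (\<lambda>n. indicator A n *\<^sub>R d n) K"
  shows "dominates_with e (\<lambda>n. t n *\<^sub>R d n) (2 * norm t * K)"
  using assms norm_bounded[of t, unfolded real_norm_def] by (rule dominates_with_bounded_multiplier)

lemma blinfun_apply_multiplier_operator:
  fixes e :: "nat \<Rightarrow> 'a::banach" and d :: "nat \<Rightarrow> 'b::banach"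
  assumes "schauder_basis e" and "\<And>A. dominates_with e (\<lambda>n. indicator A n *\<^sub>R d n) K"
  shows "blinfun_apply (multiplier_operator e d t) = basis_map e (\<lambda>n. t n *\<^sub>R d n)"
  using bounded_linear_basis_map[OF assms(1) dominates_with_multiplier[OF assms(2)]]
  unfolding multiplier_operator_def by (rule bounded_linear_Blinfun_apply)

lemma bounded_linear_multiplier_operator:
  fixes e :: "nat \<Rightarrow> 'a::banach" and d :: "nat \<Rightarrow> 'b::banach"
  assumes b: "schauder_basis e" and K: "\<And>A. dominates_with e (\<lambda>n. indicator A n *\<^sub>R d n) K" "0 \<le> K"
  shows "bounded_linear (multiplier_operator e d)"
proof (rule bounded_linear_intro[where K="2 * K"])
  note T = blinfun_apply_multiplier_operator[OF b K(1)]
  note dom = dominates_with_multiplier[OF K(1)]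
  fix t u :: "nat \<Rightarrow>\<^sub>C real"
  show "multiplier_operator e d (t + u) = multiplier_operator e d t + multiplier_operator e d u"
    by (rule blinfun_eqI)
      (unfold plus_blinfun.rep_eq T, simp add: scaleR_add_left basis_map_add[OF b dom dom])
  fix r :: real
  show "multiplier_operator e d (r *\<^sub>R t) = r *\<^sub>R multiplier_operator e d t"
    by (rule blinfun_eqI)
      (unfold scaleR_blinfun.rep_eq T, simp add: basis_map_scaleR[OF b dom, symmetric])
  have "norm (multiplier_operator e d t) \<le> 2 * norm t * K"
    using K(2) by (intro norm_blinfun_bound) (simp_all add: T norm_basis_map_le[OF b dom])
  then show "norm (multiplier_operator e d t) \<le> norm t * (2 * K)"
    by (simp add: mult_ac)
qed

lemma norm_multiplier_operator_ge:
  fixes e :: "nat \<Rightarrow> 'a::banach" and d :: "nat \<Rightarrow> 'b::banach"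
  assumes b: "schauder_basis e" and K: "\<And>A. dominates_with e (\<lambda>n. indicator A n *\<^sub>R d n) K"
    and B: "B > 0" "\<And>n. norm (e n) \<le> B"
    and \<delta>: "\<delta> > 0" "\<And>n. \<delta> \<le> norm (d n)"
  shows "\<delta> / B * norm t \<le> norm (multiplier_operator e d t)"
proof -
  let ?T = "multiplier_operator e d t"
  have "\<bar>t n\<bar> * \<delta> \<le> norm ?T * B" for n
  proof -
    have "\<bar>t n\<bar> * \<delta> \<le> \<bar>t n\<bar> * norm (d n)"
      using \<delta>(2) by (rule mult_left_mono) simp
    also have "\<dots> = norm (blinfun_apply ?T (e n))"
      by (simp add: blinfun_apply_multiplier_operator[OF b K] basis_map_basis[OF b])
    also have "\<dots> \<le> norm ?T * norm (e n)"
      by (rule norm_blinfun)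
    also have "\<dots> \<le> norm ?T * B"
      using B(2) by (rule mult_left_mono) simp
    finally show ?thesis .
  qed
  then have "norm t \<le> norm ?T * B / \<delta>"
    using \<delta>(1) by (intro norm_bound) (simp add: pos_le_divide_eq)
  then show ?thesis
    using \<delta>(1) B(1) by (simp add: field_simps)
qed

lemma isomorphic_embedding_multiplier_operator:
  fixes e :: "nat \<Rightarrow> 'a::banach" and d :: "nat \<Rightarrow> 'b::banach"
  assumes "schauder_basis e"
    and "\<And>A. dominates_with e (\<lambda>n. indicator A n *\<^sub>R d n) K" "0 \<le> K"
    and "B > 0" "\<And>n. norm (e n) \<le> B"
    and "\<delta> > 0" "\<And>n. \<delta> \<le> norm (d n)"
  shows "isomorphic_embedding (multiplier_operator e d)"
  unfolding isomorphic_embedding_def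
  using bounded_linear_multiplier_operator[OF assms(1-3)]
    norm_multiplier_operator_ge[OF assms(1,2,4-7)] \<open>B > 0\<close> \<open>\<delta> > 0\<close>
  by (blast intro: divide_pos_pos)

lemma quasisubsymmetric_interlaced_differences:
  assumes qs: "quasisubsymmetric e" and pq: "\<And>n. p n < q n" "\<And>n. q n < p (Suc n)"
  shows "\<exists>K. dominates_with e (\<lambda>n. indicator A n *\<^sub>R (e (q n) - e (p n))) K"
proof -
  define l where "l n = (if n \<in> A then q n else p n)" for n
  have "p n < p (Suc n)" and "l n < l (Suc n)" for n
    using pq[of n] pq[of "Suc n"] by (auto simp: l_def dest: less_trans)
  then have "strict_mono p" and "strict_mono l"
    by (simp_all add: strict_mono_Suc_iff)
  then obtain C D where "dominates_with e (e \<circ> l) C" and "dominates_with e (e \<circ> p) D"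
    using quasisubsymmetric_dominates_subseq[OF qs] unfolding dominates_iff_dominates_with by blast
  then have "dominates_with e (\<lambda>n. e (l n) - e (p n)) (C + D)"
    unfolding comp_def by (rule dominates_with_diff)
  moreover have "e (l n) - e (p n) = indicator A n *\<^sub>R (e (q n) - e (p n))" for n
    by (simp add: l_def indicator_def)
  ultimately show ?thesis
    by auto
qed

theorem theorem2p4:
  fixes e :: "nat \<Rightarrow> 'a::banach"
  assumes "schauder_basis e"
    and "seminormalized e"
    and "quasisubsymmetric e"
  shows "\<exists>T :: (nat \<Rightarrow>\<^sub>C real) \<Rightarrow> ('a \<Rightarrow>\<^sub>L 'a). isomorphic_embedding T"
proof -
  obtain \<delta> p q where "\<delta> > 0" and pq: "\<And>n. p n < q n" "\<And>n. q n < p (Suc n)"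
    and far: "\<And>n. \<delta> \<le> dist (e (q n)) (e (p n))"
    using not_Cauchy_separated_pairs[OF quasisubsymmetric_basis_not_Cauchy[OF assms]] by blast
  define d where "d n = e (q n) - e (p n)" for n
  obtain K where "0 \<le> K" and K: "\<And>A. dominates_with e (\<lambda>n. indicator A n *\<^sub>R d n) K"
    using dominates_with_indicator_uniform
      quasisubsymmetric_interlaced_differences[where p=p and q=q, OF assms(3) pq]
    unfolding d_def by metis
  obtain c B where "0 < c" and B: "\<And>n. c \<le> norm (e n) \<and> norm (e n) \<le> B"
    using assms(2) unfolding seminormalized_def by blast
  have "B > 0"
    using \<open>0 < c\<close> B[of 0] by linarith
  moreover have "\<And>n. norm (e n) \<le> B"
    using B by blast
  moreover have "\<And>n. \<delta> \<le> norm (d n)"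
    using far by (simp add: d_def dist_norm)
  ultimately have "isomorphic_embedding (multiplier_operator e d)"
    using assms(1) K \<open>0 \<le> K\<close> \<open>\<delta> > 0\<close> by (intro isomorphic_embedding_multiplier_operator)
  then show ?thesis
    by blast
qed

end
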